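(* Let $f\neq 0$ and $\mu\in\mathbb{R}$ with $\mu\notin\{0,1,-1\}$. Consider the plane curve $\gamma(\xi)=\big(r(\xi)\cos\xi,\ r(\xi)\sin\xi\big)$, where $$r(\xi)=f\left(\mu\cos\xi+\sqrt{2-\cos^2\xi}\right),$$ traversed in the direction of increasing $\xi$, and let $k(\xi)$ denote its signed curvature with respect to this orientation. Then: (i) At $\xi=0$ the curve passes through $(f(\mu+1),0)$ with unit tangent $(\cos\tau,\sin\tau)$, $\tau=\frac{\pi}{2}\,\mathrm{sgn}[f(\mu+1)]$, and curvature $k(0)=\dfrac{2\mu}{|f|\,|\mu+1|\,(\mu+1)}$; at $\xi=\pi$ it passes through $(f(\mu-1),0)$ with tangent angle $\tau=\frac{\pi}{2}\,\mathrm{sgn}[f(\mu-1)]$ and curvature $k(\pi)=\dfrac{2\mu}{|f|\,|\mu-1|\,(\mu-1)}$. (ii) The circles of curvature (osculating circles) of the curve at the points $\xi=0$ and $\xi=\pi$ are concentric, with common center $\left(f\,\dfrac{\mu^2-1}{2\mu},\,0\right)$. (iii) If $|\mu|>1$ (so that $k(0)$ and $k(\pi)$ have the same sign), then along the arc $0\le\xi\le\pi$ the curvature varies monotonically with arc length, and the total turning angle of the tangent along this arc is $2\pi$.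
   Context: Signed curvature of a regular parametrized plane curve $(x(\xi),y(\xi))$ is $k=(x'y''-y'x'')/(x'^2+y'^2)^{3/2}$. The curve is the one given in implicit form by $\left(x^2+y^2-\mu f x\right)^2=f^2(x^2+2y^2)$. The "circle of curvature" at a point is the circle tangent to the curve there with radius $1/|k|$ and center on the normal on the side of curvature. *)

theory Defs
  imports "HOL-Analysis.Analysis"
begin

definition rad :: "real \<Rightarrow> real \<Rightarrow> real \<Rightarrow> real" where
  "rad f \<mu> \<xi> = f * (\<mu> * cos \<xi> + sqrt (2 - (cos \<xi>)^2))"

definition cx :: "real \<Rightarrow> real \<Rightarrow> real \<Rightarrow> real" where
  "cx f \<mu> \<xi> = rad f \<mu> \<xi> * cos \<xi>"

definition cy :: "real \<Rightarrow> real \<Rightarrow> real \<Rightarrow> real" where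
  "cy f \<mu> \<xi> = rad f \<mu> \<xi> * sin \<xi>"

definition speed :: "(real \<Rightarrow> real) \<Rightarrow> (real \<Rightarrow> real) \<Rightarrow> real \<Rightarrow> real" where
  "speed x y t = sqrt ((deriv x t)^2 + (deriv y t)^2)"

definition signed_curvature :: "(real \<Rightarrow> real) \<Rightarrow> (real \<Rightarrow> real) \<Rightarrow> real \<Rightarrow> real" where
  "signed_curvature x y t =
     (deriv x t * deriv (deriv y) t - deriv y t * deriv (deriv x) t)
     / ((deriv x t)^2 + (deriv y t)^2) powr (3/2)"

definition unit_tangent :: "(real \<Rightarrow> real) \<Rightarrow> (real \<Rightarrow> real) \<Rightarrow> real \<Rightarrow> real \<times> real" where
  "unit_tangent x y t = (deriv x t / speed x y t, deriv y t / speed x y t)"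

definition unit_normal :: "(real \<Rightarrow> real) \<Rightarrow> (real \<Rightarrow> real) \<Rightarrow> real \<Rightarrow> real \<times> real" where
  "unit_normal x y t = (- deriv y t / speed x y t, deriv x t / speed x y t)"

text \<open>Centre of the circle of curvature: on the normal line, at distance 1/|k|,
  on the side towards which the curve bends (direction sgn k times the left normal).\<close>
definition osc_center :: "(real \<Rightarrow> real) \<Rightarrow> (real \<Rightarrow> real) \<Rightarrow> real \<Rightarrow> real \<times> real" where
  "osc_center x y t =
     (let k = signed_curvature x y t; (n1, n2) = unit_normal x y t
      in (x t + (1 / \<bar>k\<bar>) * sgn k * n1, y t + (1 / \<bar>k\<bar>) * sgn k * n2))"

definition osc_radius :: "(real \<Rightarrow> real) \<Rightarrow> (real \<Rightarrow> real) \<Rightarrow> real \<Rightarrow> real" where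
  "osc_radius x y t = 1 / \<bar>signed_curvature x y t\<bar>"

definition arclen :: "(real \<Rightarrow> real) \<Rightarrow> (real \<Rightarrow> real) \<Rightarrow> real \<Rightarrow> real" where
  "arclen x y t = integral {0..t} (speed x y)"

end

theory Submission imports Defs begin

text \<open>In polar form the curve is \<open>r = f R\<close> with \<open>R \<xi> = \<mu> cos \<xi> + W \<xi>\<close>, \<open>W \<xi> = sqrt (2 - cos\<^sup>2 \<xi>)\<close>.
  At \<open>\<xi> = 0, pi\<close> we have \<open>R' = 0\<close>, so the tangent is vertical and \<open>x'' = -2 f \<mu>\<close>; this gives the
  curvature \<open>-x'' / (\<bar>y'\<bar> y')\<close> and the centre \<open>x + y'\<^sup>2 / x''\<close>, which equals \<open>f (\<mu>\<^sup>2 - 1) / (2 \<mu>)\<close> at both points.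
  For a polar curve \<open>k = (r\<^sup>2 + 2 r'\<^sup>2 - r r'') / (r\<^sup>2 + r'\<^sup>2)\<^sup>3\<^sup>/\<^sup>2\<close>; in terms of \<open>c = cos \<xi>\<close> this reads
  \<open>\<bar>f\<bar> k = K c\<close>, and \<open>K' c = -12 (1 + \<mu>\<^sup>2) (c + \<mu> W) / (W P\<^sup>5\<^sup>/\<^sup>2)\<close>. For \<open>\<bar>\<mu>\<bar> > 1\<close> the factor
  \<open>c + \<mu> W\<close> has the sign of \<open>\<mu>\<close>, so \<open>k\<close> is monotone in \<open>\<xi>\<close>, hence in the strictly increasing arc length.
  Finally \<open>k |\<gamma>'|\<close> is the derivative of the tangent angle \<open>\<xi> + arg (r', r)\<close>; as \<open>\<mu> r'\<close> has constant sign on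
  \<open>[0, pi]\<close>, a continuous branch of it is given by the half-angle formula, and it rises from \<open>-pi/2\<close>
  to \<open>3 pi/2\<close>.\<close>

section \<open>Plane curves\<close>

lemma powr_three_halves:
  fixes x :: real
  assumes "x \<ge> 0"
  shows "x powr (3/2) = x * sqrt x"
proof (cases "x = 0")
  case False
  then have "x powr (1 + 1/2) = x * sqrt x"
    using assms by (subst powr_add) (simp add: powr_half_sqrt)
  then show ?thesis by simp
qed simp

lemma signed_curvature_mult_speed:
  assumes "(deriv x t)^2 + (deriv y t)^2 > 0"
  shows "signed_curvature x y t * speed x y t
    = (deriv x t * deriv (deriv y) t - deriv y t * deriv (deriv x) t) / ((deriv x t)^2 + (deriv y t)^2)"
proof -
  define q where "q = (deriv x t)^2 + (deriv y t)^2"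
  have "sqrt q > 0"
    using assms by (simp add: q_def)
  then show ?thesis
    unfolding signed_curvature_def speed_def q_def[symmetric]
    by (simp add: powr_three_halves field_simps)
qed

lemma vertical_tangent_point:
  assumes "deriv x t = 0" "deriv y t = v" "deriv (deriv x) t = a" "deriv (deriv y) t = 0"
    and "v \<noteq> 0" "a \<noteq> 0"
  shows "unit_tangent x y t = (cos (pi/2 * sgn v), sin (pi/2 * sgn v))"
    and "signed_curvature x y t = - a / (\<bar>v\<bar> * v)"
    and "osc_center x y t = (x t + v^2 / a, y t)"
proof -
  have speed: "speed x y t = \<bar>v\<bar>"
    using assms by (simp add: speed_def)
  show "unit_tangent x y t = (cos (pi/2 * sgn v), sin (pi/2 * sgn v))"
    using assms speed by (cases "v > 0") (auto simp: unit_tangent_def sgn_if)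
  define k where "k = - a / (\<bar>v\<bar> * v)"
  have "(v^2) powr (3/2) = \<bar>v\<bar> * v^2"
    by (simp add: powr_three_halves)
  then have curvature: "signed_curvature x y t = k"
    using assms by (simp add: signed_curvature_def power2_eq_square k_def)
  then show "signed_curvature x y t = - a / (\<bar>v\<bar> * v)"
    by (simp add: k_def)
  have "1 / \<bar>k\<bar> * sgn k = 1 / k"
    by (cases "k > 0") (auto simp: sgn_if)
  moreover have "1 / k * (- v / \<bar>v\<bar>) = v^2 / a"
    using assms by (simp add: k_def field_simps power2_eq_square)
  ultimately have "1 / \<bar>k\<bar> * sgn k * (- deriv y t / speed x y t) = v^2 / a"
    using assms speed by simp
  then show "osc_center x y t = (x t + v^2 / a, y t)"
    using assms speed curvature by (simp add: osc_center_def unit_normal_def Let_def ac_simps)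
qed

lemma arclen_strict_mono:
  assumes cont: "continuous_on {0..} (speed x y)" and pos: "\<And>t. t \<ge> 0 \<Longrightarrow> speed x y t > 0"
  shows "strict_mono_on {0..} (arclen x y)"
proof (rule strict_mono_onI)
  fix b a :: real
  assume "b \<in> {0..}" "a \<in> {0..}" "b < a"
  then have sub: "{0..a} \<subseteq> {0..}" "{b..a} \<subseteq> {0..}" and "0 \<le> b" "b \<le> a"
    by auto
  have "speed x y integrable_on {0..a}"
    using cont sub by (intro integrable_continuous_interval) (rule continuous_on_subset)
  from Henstock_Kurzweil_Integration.integral_combine[OF \<open>0 \<le> b\<close> \<open>b \<le> a\<close> this]
  have split: "arclen x y a = arclen x y b + integral {b..a} (speed x y)"
    unfolding arclen_def by simp
  have "integral {b..a} (\<lambda>_. 0) < integral {b..a} (speed x y)"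
    using \<open>b < a\<close> \<open>0 \<le> b\<close> continuous_on_subset[OF cont sub(2)] pos
    by (intro integral_less_real) auto
  then show "arclen x y b < arclen x y a"
    using split by simp
qed

text \<open>The half-angle formula: \<open>2 arctan (b / (|(a, b)| + a))\<close> is the polar angle of \<open>(a, b)\<close>
  away from the negative real axis.\<close>

lemma polar_angle_has_real_derivative:
  fixes a b :: "real \<Rightarrow> real"
  assumes da: "(a has_real_derivative a') (at t)" and db: "(b has_real_derivative b') (at t)"
    and pos: "a t^2 + b t^2 > 0" and off_axis: "sqrt (a t^2 + b t^2) + a t > 0"
  shows "((\<lambda>t. 2 * arctan (b t / (sqrt (a t^2 + b t^2) + a t))) has_real_derivative
           (a t * b' - b t * a') / (a t^2 + b t^2)) (at t)"
proof -
  define N where "N = sqrt (a t^2 + b t^2)"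
  define u where "u = N + a t"
  have N2: "N^2 = a t^2 + b t^2" and "N > 0" and "u > 0"
    using pos off_axis by (simp_all add: N_def u_def)
  have "((\<lambda>t. sqrt (a t^2 + b t^2)) has_real_derivative (a t * a' + b t * b') / N) (at t)"
    using pos \<open>N > 0\<close> by (auto intro!: derivative_eq_intros da db simp: N_def[symmetric] field_simps)
  from DERIV_divide[OF db DERIV_add[OF this da]] \<open>u > 0\<close>
  have "((\<lambda>t. b t / (sqrt (a t^2 + b t^2) + a t)) has_real_derivative
      (b' * u - b t * ((a t * a' + b t * b') / N + a')) / (u * u)) (at t)"
    unfolding u_def N_def by simp
  also have "b' * u - b t * ((a t * a' + b t * b') / N + a') = (a t * b' - b t * a') * u / N"
    using \<open>N > 0\<close> unfolding u_def by (simp add: field_simps) (use N2 in algebra)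
  finally have deriv: "((\<lambda>t. 2 * arctan (b t / (sqrt (a t^2 + b t^2) + a t))) has_real_derivative
      2 * (inverse (1 + (b t / u)^2) * ((a t * b' - b t * a') * u / N / (u * u)))) (at t)"
    unfolding u_def N_def by (intro DERIV_cmult DERIV_arctan[THEN DERIV_chain2])
  have "1 + (b t / u)^2 = 2 * N / u"
  proof -
    have "u^2 + (b t)^2 = 2 * N * u"
      using N2 unfolding u_def by algebra
    then show ?thesis
      using \<open>u > 0\<close> by (simp add: field_simps power2_eq_square)
  qed
  then have "2 * (inverse (1 + (b t / u)^2) * ((a t * b' - b t * a') * u / N / (u * u)))
      = (a t * b' - b t * a') / (a t^2 + b t^2)"
    unfolding N2[symmetric] using \<open>N > 0\<close> \<open>u > 0\<close> by (simp add: field_simps power2_eq_square)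
  with deriv show ?thesis
    by simp
qed
section \<open>Polar curves\<close>

locale polar_curve =
  fixes r r' r'' x y :: "real \<Rightarrow> real"
  assumes r_has_derivative: "\<And>t. (r has_real_derivative r' t) (at t)"
    and r'_has_derivative: "\<And>t. (r' has_real_derivative r'' t) (at t)"
    and x_eq: "x = (\<lambda>t. r t * cos t)" and y_eq: "y = (\<lambda>t. r t * sin t)"
begin

lemma deriv_x: "deriv x = (\<lambda>t. r' t * cos t - r t * sin t)"
  unfolding x_eq
  by (intro ext DERIV_imp_deriv) (auto intro!: derivative_eq_intros r_has_derivative)

lemma deriv_y: "deriv y = (\<lambda>t. r' t * sin t + r t * cos t)"
  unfolding y_eq
  by (intro ext DERIV_imp_deriv) (auto intro!: derivative_eq_intros r_has_derivative)

lemma deriv2_x: "deriv (deriv x) = (\<lambda>t. r'' t * cos t - 2 * r' t * sin t - r t * cos t)"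
  unfolding deriv_x
  by (intro ext DERIV_imp_deriv)
    (auto intro!: derivative_eq_intros r_has_derivative r'_has_derivative simp: algebra_simps)

lemma deriv2_y: "deriv (deriv y) = (\<lambda>t. r'' t * sin t + 2 * r' t * cos t - r t * sin t)"
  unfolding deriv_y
  by (intro ext DERIV_imp_deriv)
    (auto intro!: derivative_eq_intros r_has_derivative r'_has_derivative simp: algebra_simps)

lemma speed_sq: "(deriv x t)^2 + (deriv y t)^2 = r t^2 + r' t^2"
  using sin_cos_squared_add[of t] unfolding deriv_x deriv_y by algebra

lemma cross_derivs:
  "deriv x t * deriv (deriv y) t - deriv y t * deriv (deriv x) t = r t^2 + 2 * r' t^2 - r t * r'' t"
  using sin_cos_squared_add[of t] unfolding deriv2_x deriv2_y unfolding deriv_x deriv_y by algebra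

lemma speed_eq: "speed x y t = sqrt (r t^2 + r' t^2)"
  by (simp add: speed_def speed_sq)

lemma continuous_on_speed: "continuous_on S (speed x y)"
proof -
  have "continuous_on S r" "continuous_on S r'"
    using DERIV_isCont r_has_derivative r'_has_derivative by (blast intro: continuous_at_imp_continuous_on)+
  then show ?thesis
    unfolding speed_eq[abs_def] by (intro continuous_intros)
qed

lemma signed_curvature_eq:
  "signed_curvature x y t = (r t^2 + 2 * r' t^2 - r t * r'' t) / (r t^2 + r' t^2) powr (3/2)"
  unfolding signed_curvature_def cross_derivs speed_sq ..

lemma signed_curvature_mult_speed_eq:
  assumes "r t^2 + r' t^2 > 0"
  shows "signed_curvature x y t * speed x y t = (r t^2 + 2 * r' t^2 - r t * r'' t) / (r t^2 + r' t^2)"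
  using signed_curvature_mult_speed[of x t y] assms unfolding cross_derivs speed_sq by simp

text \<open>The velocity is \<open>(r' + i r) e\<^sup>i\<^sup>t\<close>, so its direction is \<open>t\<close> plus the polar angle of \<open>(r', r)\<close>;
  the sign \<open>\<sigma>\<close> selects which of the two antipodal directions is measured, so that the
  half-angle formula stays valid.\<close>

definition tangent_angle :: "real \<Rightarrow> real \<Rightarrow> real" where
  "tangent_angle \<sigma> t = t + 2 * arctan (\<sigma> * r t / (sqrt (r t^2 + r' t^2) + \<sigma> * r' t))"

lemma tangent_angle_has_derivative:
  assumes "\<sigma>^2 = 1" and pos: "r t^2 + r' t^2 > 0" and off_axis: "\<sigma> * r' t \<ge> 0"
  shows "(tangent_angle \<sigma> has_real_derivative
           (r t^2 + 2 * r' t^2 - r t * r'' t) / (r t^2 + r' t^2)) (at t)"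
proof -
  have sq: "(\<sigma> * u)^2 + (\<sigma> * v)^2 = v^2 + u^2" for u v
    using assms(1) by (simp add: power_mult_distrib)
  have num: "\<sigma> * r' t * (\<sigma> * r' t) - \<sigma> * r t * (\<sigma> * r'' t) = r' t^2 - r t * r'' t"
    using assms(1) by algebra
  have "((\<lambda>t. \<sigma> * r' t) has_real_derivative \<sigma> * r'' t) (at t)"
    "((\<lambda>t. \<sigma> * r t) has_real_derivative \<sigma> * r' t) (at t)"
    by (intro DERIV_cmult r_has_derivative r'_has_derivative)+
  from polar_angle_has_real_derivative[OF this]
  have "((\<lambda>t. 2 * arctan (\<sigma> * r t / (sqrt (r t^2 + r' t^2) + \<sigma> * r' t)))
      has_real_derivative (r' t^2 - r t * r'' t) / (r t^2 + r' t^2)) (at t)"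
    using pos off_axis by (simp add: sq num add_pos_nonneg)
  then have "((\<lambda>t. t + 2 * arctan (\<sigma> * r t / (sqrt (r t^2 + r' t^2) + \<sigma> * r' t)))
      has_real_derivative 1 + (r' t^2 - r t * r'' t) / (r t^2 + r' t^2)) (at t)"
    by (intro DERIV_add DERIV_ident)
  moreover have "1 + (r' t^2 - r t * r'' t) / (r t^2 + r' t^2)
      = (r t^2 + 2 * r' t^2 - r t * r'' t) / (r t^2 + r' t^2)"
  proof -
    have "r t^2 + r' t^2 \<noteq> 0"
      using pos by linarith
    then show ?thesis
      by (simp add: field_simps)
  qed
  ultimately show ?thesis
    unfolding tangent_angle_def[abs_def] by simp
qed

lemma total_curvature:
  assumes "a \<le> b" "\<sigma>^2 = 1"
    and "\<And>t. t \<in> {a..b} \<Longrightarrow> r t^2 + r' t^2 > 0" "\<And>t. t \<in> {a..b} \<Longrightarrow> \<sigma> * r' t \<ge> 0"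
  shows "((\<lambda>t. signed_curvature x y t * speed x y t) has_integral
           tangent_angle \<sigma> b - tangent_angle \<sigma> a) {a..b}"
proof -
  have "((\<lambda>t. (r t^2 + 2 * r' t^2 - r t * r'' t) / (r t^2 + r' t^2)) has_integral
           tangent_angle \<sigma> b - tangent_angle \<sigma> a) {a..b}"
    using assms
    by (intro fundamental_theorem_of_calculus)
      (auto simp: has_real_derivative_iff_has_vector_derivative[symmetric]
        intro: has_field_derivative_at_within tangent_angle_has_derivative)
  then show ?thesis
    by (rule has_integral_eq[rotated]) (simp add: signed_curvature_mult_speed_eq assms(3))
qed

end

section \<open>The curve \<open>r = f (\<mu> cos \<xi> + sqrt (2 - cos\<^sup>2 \<xi>))\<close>\<close>

definition W :: "real \<Rightarrow> real" where
  "W \<xi> = sqrt (2 - (cos \<xi>)^2)"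

definition R :: "real \<Rightarrow> real \<Rightarrow> real" where
  "R \<mu> \<xi> = \<mu> * cos \<xi> + W \<xi>"

definition R' :: "real \<Rightarrow> real \<Rightarrow> real" where
  "R' \<mu> \<xi> = sin \<xi> * (cos \<xi> - \<mu> * W \<xi>) / W \<xi>"

definition R'' :: "real \<Rightarrow> real \<Rightarrow> real" where
  "R'' \<mu> \<xi> = 2 / W \<xi> ^ 3 - R \<mu> \<xi>"

lemma cos_sq_le_one: "(cos (\<xi>::real))^2 \<le> 1"
  by (simp add: abs_square_le_1)

lemma W_sq: "W \<xi> ^ 2 = 2 - (cos \<xi>)^2"
  using cos_sq_le_one[of \<xi>] by (simp add: W_def)

lemma W_ge_one: "W \<xi> \<ge> 1"
  using cos_sq_le_one[of \<xi>] by (simp add: W_def)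

lemma W_pos: "W \<xi> > 0"
  using W_ge_one[of \<xi>] by simp

lemma W_nonzero [simp]: "W \<xi> \<noteq> 0"
  using W_pos[of \<xi>] by simp

lemma W_has_real_derivative [derivative_intros]:
  "(W has_real_derivative cos \<xi> * sin \<xi> / W \<xi>) (at \<xi> within S)"
proof -
  have "((\<lambda>\<xi>. sqrt (2 - (cos \<xi>)^2)) has_real_derivative cos \<xi> * sin \<xi> / W \<xi>) (at \<xi> within S)"
    using cos_sq_le_one[of \<xi>]
    by (auto intro!: derivative_eq_intros simp: W_def field_simps power2_eq_square)
  then show ?thesis by (simp add: W_def[abs_def])
qed

lemma R_has_real_derivative [derivative_intros]:
  "(R \<mu> has_real_derivative R' \<mu> \<xi>) (at \<xi> within S)"
proof -
  have "((\<lambda>\<xi>. \<mu> * cos \<xi> + W \<xi>) has_real_derivative R' \<mu> \<xi>) (at \<xi> within S)"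
    by (auto intro!: derivative_eq_intros simp: R'_def field_simps)
  then show ?thesis by (simp add: R_def[abs_def])
qed

lemma R'_has_real_derivative [derivative_intros]:
  "(R' \<mu> has_real_derivative R'' \<mu> \<xi>) (at \<xi> within S)"
proof -
  have "((\<lambda>\<xi>. sin \<xi> * cos \<xi> / W \<xi> - \<mu> * sin \<xi>) has_real_derivative
     (cos \<xi> * cos \<xi> - sin \<xi> * sin \<xi>) / W \<xi> - sin \<xi> * cos \<xi> * (cos \<xi> * sin \<xi> / W \<xi>) / (W \<xi>)^2
       - \<mu> * cos \<xi>) (at \<xi> within S)"
    by (auto intro!: derivative_eq_intros simp: field_simps power2_eq_square)
  also have "(cos \<xi> * cos \<xi> - sin \<xi> * sin \<xi>) / W \<xi> - sin \<xi> * cos \<xi> * (cos \<xi> * sin \<xi> / W \<xi>) / (W \<xi>)^2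
       - \<mu> * cos \<xi> = R'' \<mu> \<xi>"
    using W_pos[of \<xi>] unfolding R''_def R_def
    by (simp add: field_simps) (insert W_sq[of \<xi>] sin_cos_squared_add[of \<xi>], algebra)
  also have "(\<lambda>\<xi>. sin \<xi> * cos \<xi> / W \<xi> - \<mu> * sin \<xi>) = R' \<mu>"
    by (simp add: fun_eq_iff R'_def field_simps)
  finally show ?thesis .
qed

lemma rad_eq: "rad f \<mu> \<xi> = f * R \<mu> \<xi>"
  by (simp add: rad_def R_def W_def)

interpretation curve: polar_curve "rad f \<mu>" "\<lambda>\<xi>. f * R' \<mu> \<xi>" "\<lambda>\<xi>. f * R'' \<mu> \<xi>" "cx f \<mu>" "cy f \<mu>"
  for f \<mu>
proof
  have "rad f \<mu> = (\<lambda>\<xi>. f * R \<mu> \<xi>)"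
    by (simp add: fun_eq_iff rad_eq)
  then show "(rad f \<mu> has_real_derivative f * R' \<mu> t) (at t)" for t
    by (auto intro!: derivative_eq_intros)
  show "((\<lambda>\<xi>. f * R' \<mu> \<xi>) has_real_derivative f * R'' \<mu> t) (at t)" for t
    by (auto intro!: derivative_eq_intros)
  show "cx f \<mu> = (\<lambda>t. rad f \<mu> t * cos t)" "cy f \<mu> = (\<lambda>t. rad f \<mu> t * sin t)"
    by (simp_all add: fun_eq_iff cx_def cy_def)
qed

lemma axis_crossing:
  assumes "sin \<xi> = 0" "f \<noteq> 0" "\<mu> \<noteq> 0" "\<mu> + cos \<xi> \<noteq> 0"
  shows "(cx f \<mu> \<xi>, cy f \<mu> \<xi>) = (f * (\<mu> + cos \<xi>), 0)"
    and "unit_tangent (cx f \<mu>) (cy f \<mu>) \<xi>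
      = (cos (pi/2 * sgn (f * (\<mu> + cos \<xi>))), sin (pi/2 * sgn (f * (\<mu> + cos \<xi>))))"
    and "signed_curvature (cx f \<mu>) (cy f \<mu>) \<xi> = 2 * \<mu> / (\<bar>f\<bar> * \<bar>\<mu> + cos \<xi>\<bar> * (\<mu> + cos \<xi>))"
    and "osc_center (cx f \<mu>) (cy f \<mu>) \<xi> = (f * (\<mu>^2 - 1) / (2 * \<mu>), 0)"
proof -
  define e where "e = cos \<xi>"
  have e2: "e^2 = 1"
    using sin_cos_squared_add[of \<xi>] assms(1) by (simp add: e_def)
  have W: "W \<xi> = 1"
    using e2 by (simp add: W_def e_def)
  have point: "cx f \<mu> \<xi> = f * (\<mu> + e)" "cy f \<mu> \<xi> = 0"
    using assms(1) e2 by (simp_all add: cx_def cy_def rad_eq R_def W e_def power2_eq_square algebra_simps)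
  have "deriv (cx f \<mu>) \<xi> = 0" "deriv (cy f \<mu>) \<xi> = f * (\<mu> + e)"
    "deriv (deriv (cx f \<mu>)) \<xi> = - 2 * f * \<mu>" "deriv (deriv (cy f \<mu>)) \<xi> = 0"
    using assms(1) e2 unfolding curve.deriv2_x curve.deriv2_y unfolding curve.deriv_x curve.deriv_y
    by (simp_all add: rad_eq R_def R'_def R''_def W e_def[symmetric] power2_eq_square algebra_simps)
  note vertical = vertical_tangent_point[OF this]
  have "f * (\<mu> + e) \<noteq> 0" "- 2 * f * \<mu> \<noteq> 0"
    using assms by (simp_all add: e_def)
  note vertical = vertical[OF this]
  show "(cx f \<mu> \<xi>, cy f \<mu> \<xi>) = (f * (\<mu> + cos \<xi>), 0)"
    using point by (simp add: e_def)
  show "unit_tangent (cx f \<mu>) (cy f \<mu>) \<xi>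
      = (cos (pi/2 * sgn (f * (\<mu> + cos \<xi>))), sin (pi/2 * sgn (f * (\<mu> + cos \<xi>))))"
    using vertical(1) by (simp add: e_def)
  show "signed_curvature (cx f \<mu>) (cy f \<mu>) \<xi> = 2 * \<mu> / (\<bar>f\<bar> * \<bar>\<mu> + cos \<xi>\<bar> * (\<mu> + cos \<xi>))"
  proof -
    have "\<mu> + e \<noteq> 0"
      using assms(4) by (simp add: e_def)
    then have "- (- 2 * f * \<mu>) / (\<bar>f * (\<mu> + e)\<bar> * (f * (\<mu> + e))) = 2 * \<mu> / (\<bar>f\<bar> * \<bar>\<mu> + e\<bar> * (\<mu> + e))"
      using assms(2) unfolding abs_mult by (simp add: divide_simps)
    then show ?thesis
      using vertical(2) by (simp add: e_def)
  qed
  have "f * (\<mu> + e) + (f * (\<mu> + e))^2 / (- 2 * f * \<mu>) = f * (\<mu>^2 - 1) / (2 * \<mu>)"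
    using assms(2,3) e2 by (simp add: field_simps power2_eq_square)
  then show "osc_center (cx f \<mu>) (cy f \<mu>) \<xi> = (f * (\<mu>^2 - 1) / (2 * \<mu>), 0)"
    using vertical(3) point by simp
qed

lemma mult_add_pos_of_abs_gt_one:
  fixes \<mu> c w :: real
  assumes "\<bar>\<mu>\<bar> > 1" "\<bar>c\<bar> \<le> 1" "w \<ge> 1"
  shows "\<mu> * (c + \<mu> * w) > 0"
proof -
  have "\<bar>\<mu> * c\<bar> \<le> \<bar>\<mu>\<bar>"
    using assms(2) by (simp add: abs_mult mult_left_le)
  moreover have "\<mu>^2 \<le> \<mu>^2 * w"
    using mult_left_mono[OF assms(3), of "\<mu>^2"] by simp
  moreover have "\<bar>\<mu>\<bar> * 1 < \<bar>\<mu>\<bar> * \<bar>\<mu>\<bar>"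
    using assms(1) by (intro mult_strict_left_mono) auto
  ultimately show ?thesis
    by (simp add: algebra_simps power2_eq_square)
qed

definition P :: "real \<Rightarrow> real \<Rightarrow> real" where
  "P \<mu> c = (\<mu> * sqrt (2 - c^2) + c)^2 + 4 * (1 - c^2)"

definition A :: "real \<Rightarrow> real \<Rightarrow> real" where
  "A \<mu> c = P \<mu> c * sqrt (2 - c^2) - \<mu> * c - sqrt (2 - c^2)"

definition K :: "real \<Rightarrow> real \<Rightarrow> real" where
  "K \<mu> c = 2 * A \<mu> c / (P \<mu> c * sqrt (P \<mu> c))"

lemma P_pos:
  assumes "\<bar>\<mu>\<bar> > 1" "\<bar>c\<bar> \<le> 1"
  shows "P \<mu> c > 0"
proof -
  have c: "c^2 \<le> 1"
    using assms(2) by (simp add: abs_square_le_1)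
  then have "\<mu> * (c + \<mu> * sqrt (2 - c^2)) > 0"
    using assms by (intro mult_add_pos_of_abs_gt_one) auto
  then have "\<mu> * sqrt (2 - c^2) + c \<noteq> 0"
    by (metis add.commute mult_zero_right order_less_irrefl)
  then show ?thesis
    using c unfolding P_def by (simp add: add_pos_nonneg)
qed

lemma R_sq_add_R'_sq: "R \<mu> \<xi>^2 + R' \<mu> \<xi>^2 = P \<mu> (cos \<xi>) / W \<xi>^2"
  using W_pos[of \<xi>] unfolding R_def R'_def P_def W_def[symmetric]
  by (simp add: field_simps) (insert W_sq[of \<xi>] sin_cos_squared_add[of \<xi>], algebra)

lemma signed_curvature_eq_K:
  assumes "f \<noteq> 0" "P \<mu> (cos \<xi>) > 0"
  shows "signed_curvature (cx f \<mu>) (cy f \<mu>) \<xi> = K \<mu> (cos \<xi>) / \<bar>f\<bar>"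
proof -
  define Q where "Q = R \<mu> \<xi>^2 + R' \<mu> \<xi>^2"
  have Q: "Q = P \<mu> (cos \<xi>) / W \<xi>^2" "Q > 0"
    using assms(2) W_pos[of \<xi>] by (simp_all add: Q_def R_sq_add_R'_sq)
  have "signed_curvature (cx f \<mu>) (cy f \<mu>) \<xi>
      = f^2 * (R \<mu> \<xi>^2 + 2 * R' \<mu> \<xi>^2 - R \<mu> \<xi> * R'' \<mu> \<xi>) / (f^2 * Q) powr (3/2)"
    unfolding curve.signed_curvature_eq rad_eq Q_def by (simp add: power_mult_distrib algebra_simps power2_eq_square)
  also have "\<dots> = (2 * Q - 2 * R \<mu> \<xi> / W \<xi>^3) / (\<bar>f\<bar> * Q * sqrt Q)"
  proof -
    have "(f^2 * Q) powr (3/2) = f^2 * (\<bar>f\<bar> * Q * sqrt Q)"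
      using Q(2) by (simp add: powr_three_halves real_sqrt_mult)
    moreover have "R \<mu> \<xi>^2 + 2 * R' \<mu> \<xi>^2 - R \<mu> \<xi> * R'' \<mu> \<xi> = 2 * Q - 2 * R \<mu> \<xi> / W \<xi>^3"
      by (simp add: Q_def R''_def algebra_simps power2_eq_square)
    ultimately show ?thesis
      using assms(1) by simp
  qed
  also have "\<dots> = K \<mu> (cos \<xi>) / \<bar>f\<bar>"
  proof -
    have sqrt_Q: "sqrt Q = sqrt (P \<mu> (cos \<xi>)) / W \<xi>"
      using W_pos[of \<xi>] by (simp add: Q(1) real_sqrt_divide)
    have "sqrt (P \<mu> (cos \<xi>)) > 0"
      using assms(2) by simp
    then show ?thesis
      unfolding sqrt_Q unfolding Q(1) K_def A_def W_def[symmetric] R_def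
      using assms W_pos[of \<xi>] by (simp add: field_simps) algebra
  qed
  finally show ?thesis .
qed

lemma P_has_real_derivative:
  assumes "c^2 < 2"
  shows "(P \<mu> has_real_derivative
    2 * (\<mu> * sqrt (2 - c^2) + c) * (1 - \<mu> * c / sqrt (2 - c^2)) - 8 * c) (at c)"
  unfolding P_def[abs_def] using assms
  by (auto intro!: derivative_eq_intros simp: field_simps)

lemma A_has_real_derivative:
  assumes "c^2 < 2"
  shows "(A \<mu> has_real_derivative
    (2 * (\<mu> * sqrt (2 - c^2) + c) * (1 - \<mu> * c / sqrt (2 - c^2)) - 8 * c) * sqrt (2 - c^2)
      - P \<mu> c * c / sqrt (2 - c^2) - \<mu> + c / sqrt (2 - c^2)) (at c)"
  unfolding A_def[abs_def] using assms
  by (auto intro!: derivative_eq_intros P_has_real_derivative simp: field_simps)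

lemma K_has_real_derivative:
  assumes "c^2 < 2" "P \<mu> c > 0"
  shows "(K \<mu> has_real_derivative
    - 12 * (1 + \<mu>^2) * (c + \<mu> * sqrt (2 - c^2)) / (sqrt (2 - c^2) * P \<mu> c ^ 2 * sqrt (P \<mu> c))) (at c)"
proof -
  define w where "w = sqrt (2 - c^2)"
  define q where "q = sqrt (P \<mu> c)"
  define P' where "P' = 2 * (\<mu> * w + c) * (1 - \<mu> * c / w) - 8 * c"
  define A' where "A' = P' * w - P \<mu> c * c / w - \<mu> + c / w"
  have w: "w > 0" "w^2 = 2 - c^2"
    using assms(1) by (simp_all add: w_def)
  have q: "q > 0" "P \<mu> c = q^2"
    using assms(2) by (simp_all add: q_def)
  have "(P \<mu> has_real_derivative P') (at c)" "(A \<mu> has_real_derivative A') (at c)"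
    unfolding A'_def P'_def w_def using P_has_real_derivative A_has_real_derivative assms(1) by blast+
  then have "(K \<mu> has_real_derivative
      (2 * A' * (P \<mu> c * q) - 2 * A \<mu> c * (P' * q + P \<mu> c * (P' * inverse q / 2))) / (P \<mu> c * q)^2) (at c)"
    unfolding K_def[abs_def] q_def using assms(2)
    by (auto intro!: derivative_eq_intros simp: power2_eq_square)
  also have "(2 * A' * (P \<mu> c * q) - 2 * A \<mu> c * (P' * q + P \<mu> c * (P' * inverse q / 2))) / (P \<mu> c * q)^2
      = (2 * A' * P \<mu> c - 3 * A \<mu> c * P') / (P \<mu> c ^ 2 * q)"
    unfolding q(2) using q(1) by (simp add: field_simps) algebra
  also have "2 * A' * P \<mu> c - 3 * A \<mu> c * P' = - 12 * (1 + \<mu>^2) * (c + \<mu> * w) / w"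
    unfolding A'_def P'_def A_def P_def w_def[symmetric]
    using w(1) by (simp add: field_simps) (insert w(2), algebra)
  finally show ?thesis
    unfolding w_def q_def using w q by (simp add: field_simps w_def)
qed

lemma mult_K_antimono:
  assumes "\<bar>\<mu>\<bar> > 1" "-1 \<le> u" "u \<le> v" "v \<le> 1"
  shows "\<mu> * K \<mu> v \<le> \<mu> * K \<mu> u"
proof (cases "u = v")
  case False
  with assms have "u < v"
    by simp
  have "\<mu> * K \<mu> v < \<mu> * K \<mu> u"
  proof (rule DERIV_neg_imp_decreasing[OF \<open>u < v\<close>])
    fix c
    assume "u \<le> c" "c \<le> v"
    then have c: "\<bar>c\<bar> \<le> 1" "c^2 < 2"
      using assms by (auto simp: abs_square_le_1 intro: le_less_trans[of _ 1])
    define w where "w = sqrt (2 - c^2)"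
    have "w \<ge> 1"
      using c by (simp add: w_def abs_square_le_1)
    then have "\<mu> * (c + \<mu> * w) > 0"
      using assms(1) c(1) by (rule mult_add_pos_of_abs_gt_one[rotated 2])
    have "P \<mu> c > 0"
      using P_pos assms(1) c(1) .
    have "- 12 * (1 + \<mu>^2) * (\<mu> * (c + \<mu> * w)) < 0"
      using \<open>\<mu> * (c + \<mu> * w) > 0\<close> by (intro mult_neg_pos) (auto simp: add_pos_nonneg)
    then have "\<mu> * (- 12 * (1 + \<mu>^2) * (c + \<mu> * w)) < 0"
      by (metis mult.left_commute)
    with \<open>P \<mu> c > 0\<close> \<open>w \<ge> 1\<close>
    have "\<mu> * (- 12 * (1 + \<mu>^2) * (c + \<mu> * w) / (w * P \<mu> c ^ 2 * sqrt (P \<mu> c))) < 0"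
      by (simp add: divide_neg_pos)
    then show "\<exists>y. ((\<lambda>c. \<mu> * K \<mu> c) has_real_derivative y) (at c) \<and> y < 0"
      using DERIV_cmult[OF K_has_real_derivative[OF c(2) \<open>P \<mu> c > 0\<close>], of \<mu>]
      unfolding w_def by blast
  qed
  then show ?thesis
    by simp
qed simp

lemma mult_R'_nonpos:
  assumes "\<bar>\<mu>\<bar> > 1" "0 \<le> \<xi>" "\<xi> \<le> pi"
  shows "\<mu> * R' \<mu> \<xi> \<le> 0"
proof -
  have "\<mu> * (- cos \<xi> + \<mu> * W \<xi>) > 0"
    using assms(1) W_ge_one[of \<xi>] by (intro mult_add_pos_of_abs_gt_one) auto
  moreover have "sin \<xi> \<ge> 0"
    using assms by (simp add: sin_ge_zero)
  ultimately have "0 \<le> sin \<xi> * (\<mu> * (- cos \<xi> + \<mu> * W \<xi>)) / W \<xi>"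
    using W_pos[of \<xi>] by simp
  then show ?thesis
    by (simp add: R'_def algebra_simps diff_divide_distrib)
qed

lemma speed_pos:
  assumes "f \<noteq> 0" "\<bar>\<mu>\<bar> > 1"
  shows "speed (cx f \<mu>) (cy f \<mu>) \<xi> > 0"
proof -
  have "(f * R \<mu> \<xi>)^2 + (f * R' \<mu> \<xi>)^2 = f^2 * (P \<mu> (cos \<xi>) / W \<xi>^2)"
    by (simp add: R_sq_add_R'_sq[symmetric] power_mult_distrib algebra_simps)
  moreover have "P \<mu> (cos \<xi>) > 0"
    using assms(2) by (simp add: P_pos)
  ultimately show ?thesis
    using assms(1) W_pos[of \<xi>] by (simp add: curve.speed_eq rad_eq)
qed

lemma curvature_monotone:
  assumes "f \<noteq> 0" "\<bar>\<mu>\<bar> > 1" "0 \<le> a" "a \<le> b" "b \<le> pi"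
  shows "\<mu> * signed_curvature (cx f \<mu>) (cy f \<mu>) a \<le> \<mu> * signed_curvature (cx f \<mu>) (cy f \<mu>) b"
proof -
  have "cos b \<le> cos a"
    using assms by (intro cos_monotone_0_pi_le) auto
  then have "\<mu> * K \<mu> (cos a) / \<bar>f\<bar> \<le> \<mu> * K \<mu> (cos b) / \<bar>f\<bar>"
    using assms(2) by (intro divide_right_mono mult_K_antimono) auto
  then show ?thesis
    using assms(1,2) by (simp add: signed_curvature_eq_K P_pos)
qed

lemma curvature_monotone_in_arclength:
  assumes "f \<noteq> 0" "\<bar>\<mu>\<bar> > 1"
  defines "k \<equiv> signed_curvature (cx f \<mu>) (cy f \<mu>)" and "s \<equiv> arclen (cx f \<mu>) (cy f \<mu>)"
  shows "(\<forall>a\<in>{0..pi}. \<forall>b\<in>{0..pi}. s a \<le> s b \<longrightarrow> k a \<le> k b)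
       \<or> (\<forall>a\<in>{0..pi}. \<forall>b\<in>{0..pi}. s a \<le> s b \<longrightarrow> k b \<le> k a)"
proof -
  have "strict_mono_on {0..} s"
    unfolding s_def using curve.continuous_on_speed speed_pos[OF assms(1,2)]
    by (rule arclen_strict_mono)
  then have mono: "\<mu> * k a \<le> \<mu> * k b" if "a \<in> {0..pi}" "b \<in> {0..pi}" "s a \<le> s b" for a b
    using that curvature_monotone[OF assms(1,2)] strict_mono_on_less_eq[of "{0..}" s a b]
    unfolding k_def by auto
  show ?thesis
  proof (cases "\<mu> > 0")
    case True
    then show ?thesis
      using mono by (intro disjI1) (auto simp: mult_le_cancel_left_pos)
  next
    case False
    then have "\<mu> < 0"
      using assms(2) by auto
    then show ?thesis
      using mono by (intro disjI2) (auto simp: mult_le_cancel_left_neg)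
  qed
qed

lemma total_turning:
  assumes "f \<noteq> 0" "\<bar>\<mu>\<bar> > 1"
  shows "((\<lambda>t. signed_curvature (cx f \<mu>) (cy f \<mu>) t * speed (cx f \<mu>) (cy f \<mu>) t)
           has_integral 2 * pi) {0..pi}"
proof -
  define \<sigma> where "\<sigma> = - sgn f * sgn \<mu>"
  have "\<mu> \<noteq> 0"
    using assms(2) by auto
  then have \<sigma>: "\<sigma>^2 = 1"
    using assms(1) by (simp add: \<sigma>_def power_mult_distrib sgn_if)
  have "rad f \<mu> t^2 + (f * R' \<mu> t)^2 > 0" for t
    using speed_pos[OF assms, of t] by (simp add: curve.speed_eq)
  moreover have "\<sigma> * (f * R' \<mu> t) \<ge> 0" if "t \<in> {0..pi}" for t
    using mult_R'_nonpos[OF assms(2), of t] that assms(1) unfolding \<sigma>_def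
    by (cases "f > 0"; cases "\<mu> > 0") (auto simp: sgn_if mult_le_0_iff zero_le_mult_iff)
  ultimately have "((\<lambda>t. signed_curvature (cx f \<mu>) (cy f \<mu>) t * speed (cx f \<mu>) (cy f \<mu>) t)
      has_integral curve.tangent_angle f \<mu> \<sigma> pi - curve.tangent_angle f \<mu> \<sigma> 0) {0..pi}"
    using \<sigma> by (intro curve.total_curvature) auto
  moreover have "curve.tangent_angle f \<mu> \<sigma> 0 = 2 * arctan (\<sigma> * (f * (\<mu> + 1)) / \<bar>f * (\<mu> + 1)\<bar>)"
    "curve.tangent_angle f \<mu> \<sigma> pi = pi + 2 * arctan (\<sigma> * (f * (1 - \<mu>)) / \<bar>f * (1 - \<mu>)\<bar>)"
    unfolding curve.tangent_angle_def by (simp_all add: rad_eq R_def R'_def W_def)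
  moreover have "\<sigma> * (f * (\<mu> + 1)) / \<bar>f * (\<mu> + 1)\<bar> = -1" "\<sigma> * (f * (1 - \<mu>)) / \<bar>f * (1 - \<mu>)\<bar> = 1"
    using assms unfolding \<sigma>_def times_divide_eq_right[symmetric] real_sgn_eq[symmetric] sgn_mult
    by (cases "f > 0"; cases "\<mu> > 0"; auto simp: sgn_if)+
  ultimately show ?thesis
    by (simp add: arctan_minus)
qed

theorem mainTheorem1:
  fixes f \<mu> :: real
  assumes hf: "f \<noteq> 0" and hmu: "\<mu> \<notin> {0, 1, -1}"
  defines "x \<equiv> cx f \<mu>" and "y \<equiv> cy f \<mu>"
  defines "k \<equiv> signed_curvature x y"
  shows
   "(x 0, y 0) = (f * (\<mu> + 1), 0)
    \<and> unit_tangent x y 0 = (cos (pi/2 * sgn (f * (\<mu> + 1))), sin (pi/2 * sgn (f * (\<mu> + 1))))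
    \<and> k 0 = 2 * \<mu> / (\<bar>f\<bar> * \<bar>\<mu> + 1\<bar> * (\<mu> + 1))
    \<and> (x pi, y pi) = (f * (\<mu> - 1), 0)
    \<and> unit_tangent x y pi = (cos (pi/2 * sgn (f * (\<mu> - 1))), sin (pi/2 * sgn (f * (\<mu> - 1))))
    \<and> k pi = 2 * \<mu> / (\<bar>f\<bar> * \<bar>\<mu> - 1\<bar> * (\<mu> - 1))
    \<and> osc_center x y 0 = (f * (\<mu>^2 - 1) / (2 * \<mu>), 0)
    \<and> osc_center x y pi = (f * (\<mu>^2 - 1) / (2 * \<mu>), 0)
    \<and> (\<bar>\<mu>\<bar> > 1 \<longrightarrow>
        ((\<forall>a\<in>{0..pi}. \<forall>b\<in>{0..pi}. arclen x y a \<le> arclen x y b \<longrightarrow> k a \<le> k b)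
         \<or> (\<forall>a\<in>{0..pi}. \<forall>b\<in>{0..pi}. arclen x y a \<le> arclen x y b \<longrightarrow> k b \<le> k a))
        \<and> ((\<lambda>t. k t * speed x y t) has_integral 2 * pi) {0..pi})"
proof -
  have "\<mu> \<noteq> 0" "\<mu> + cos 0 \<noteq> 0" "\<mu> + cos pi \<noteq> 0"
    using hmu by auto
  note at_0 = axis_crossing[OF sin_zero hf this(1,2)]
    and at_pi = axis_crossing[OF sin_pi hf this(1,3)]
  show ?thesis
    unfolding k_def x_def y_def
    using at_0 at_pi curvature_monotone_in_arclength[OF hf] total_turning[OF hf] by simp
qed

end
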